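(* Assume $n\ge 3t+1$. In any execution of COOL, if $\eta^{[1]}=2$ then $\eta^{[3]}\le 1$.
   Context: Setting. $n$ processors indexed by $[1:n]$, pairwise joined by reliable private synchronous channels; recipients know senders. At most $t$ processors are dishonest, controlled by an adversary who may make them deviate arbitrarily (missing values replaced by a fixed default); the others are honest. Processor $i$ holds an $\ell$-bit initial message $\boldsymbol w_i$. $\phi$ is a default value different from every $\ell$-bit message. Logarithms are base 2. Code. $k=\lfloor t/5\rfloor+1$, $c=\lceil \max\{\ell,(t/5+1)\log(n+1)\}/k\rceil$. Messages are zero-padded to $kc$ bits and viewed in $GF(2^c)^k$. Integers in $[1:n]$ are identified with distinct nonzero elements of $GF(2^c)$; $\boldsymbol h_i\in GF(2^c)^k$ has entries $h_{i,j}=\prod_{p\in[1:k],\,p\ne j}\frac{i-p}{j-p}$ (field arithmetic). COOL, Phases 1–3 (honest processor $i$). Initialization: updated message $\boldsymbol w^{(i)}:=\boldsymbol w_i$, $y^{(i)}_j:=\boldsymbol h_j^{\mathsf T}\boldsymbol w_i$, $u_i(i):=1$. Phase 1. (a) Send $(y^{(i)}_j,y^{(i)}_i)$ to each $j\ne i$. (b) For $j\ne i$, link indicator $u_i(j):=1$ if the pair received from $j$ equals $(y^{(i)}_i,y^{(i)}_j)$, else $0$. Success indicator $s_i:=1$ if $\sum_{j=1}^n u_i(j)\ge n-t$; otherwise $s_i:=0$ and $\boldsymbol w^{(i)}:=\phi$. (c) Send $s_i$ to all; each processor records the indicator received from each $j$ (own for itself) and forms $\mathcal S_1=\{j:s_j=1\}$,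 $\mathcal S_0=\{j:s_j=0\}$ (views may differ between processors). Phase 2. If $s_i=1$: set $u_i(j):=0$ for all $j\in\mathcal S_0$; if now $\sum_j u_i(j)<n-t$, set $s_i:=0$, $\boldsymbol w^{(i)}:=\phi$ and send $s_i=0$ to all. Everyone overwrites recorded indicators with newly received ones and recomputes $\mathcal S_0,\mathcal S_1$. Phase 3 begins by repeating the steps of Phase 2 once more (followed by a vote and binary agreement, irrelevant here). Notation. For $p\in\{1,2,3\}$, $s^{[p]}_i$ is the value of honest processor $i$'s success indicator at the end of (the indicator-updating steps of) Phase $p$, and $\eta^{[p]}$ is the number of distinct values in $\{\boldsymbol w_i: i\text{ honest},\ s^{[p]}_i=1\}$ (initial messages). *)

theory Defs
  imports Main
begin

text \<open>Code parameters. The field GF(2^c) is abstracted to an arbitrary field 'f;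
  processor indices i in [1:n] are identified with field elements via pt
  (assumed injective with nonzero values on [1:n]).\<close>

definition kpar :: "nat \<Rightarrow> nat" where
  "kpar t = t div 5 + 1"

definition hent :: "(nat \<Rightarrow> 'f::field) \<Rightarrow> nat \<Rightarrow> nat \<Rightarrow> nat \<Rightarrow> 'f" where
  "hent pt k i j = (\<Prod>p\<in>{1..k} - {j}. (pt i - pt p) / (pt j - pt p))"

definition code :: "(nat \<Rightarrow> 'f::field) \<Rightarrow> nat \<Rightarrow> (nat \<Rightarrow> 'f) \<Rightarrow> nat \<Rightarrow> 'f" where
  "code pt k v j = (\<Sum>p\<in>{1..k}. hent pt k j p * v p)"

definition cool_y :: "nat \<Rightarrow> (nat \<Rightarrow> 'f::field) \<Rightarrow> ('m \<Rightarrow> nat \<Rightarrow> 'f) \<Rightarrow> (nat \<Rightarrow> 'm)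
    \<Rightarrow> nat \<Rightarrow> nat \<Rightarrow> 'f" where
  "cool_y t pt enc w i j = code pt (kpar t) (enc (w i)) j"

text \<open>Execution: H = honest set, A1 j i = pair sent by dishonest j to i in Phase 1(a),
  B1 j i / B2 j i = indicator received by i from dishonest j in Phase 1(c) / Phase 2.
  Link indicator u_i(j) after Phase 1 for honest i.\<close>
definition cool_link1 :: "nat \<Rightarrow> (nat \<Rightarrow> 'f::field) \<Rightarrow> ('m \<Rightarrow> nat \<Rightarrow> 'f) \<Rightarrow> (nat \<Rightarrow> 'm)
    \<Rightarrow> nat set \<Rightarrow> (nat \<Rightarrow> nat \<Rightarrow> 'f \<times> 'f) \<Rightarrow> nat \<Rightarrow> nat \<Rightarrow> bool" where
  "cool_link1 t pt enc w H A1 i j =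
     (j = i \<or>
      (if j \<in> H then (cool_y t pt enc w j i, cool_y t pt enc w j j) else A1 j i)
        = (cool_y t pt enc w i i, cool_y t pt enc w i j))"

definition cool_s1 :: "nat \<Rightarrow> nat \<Rightarrow> (nat \<Rightarrow> 'f::field) \<Rightarrow> ('m \<Rightarrow> nat \<Rightarrow> 'f) \<Rightarrow> (nat \<Rightarrow> 'm)
    \<Rightarrow> nat set \<Rightarrow> (nat \<Rightarrow> nat \<Rightarrow> 'f \<times> 'f) \<Rightarrow> nat \<Rightarrow> bool" where
  "cool_s1 n t pt enc w H A1 i =
     (n - t \<le> card {j \<in> {1..n}. cool_link1 t pt enc w H A1 i j})"

definition cool_rec1 :: "nat \<Rightarrow> nat \<Rightarrow> (nat \<Rightarrow> 'f::field) \<Rightarrow> ('m \<Rightarrow> nat \<Rightarrow> 'f) \<Rightarrow> (nat \<Rightarrow> 'm)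
    \<Rightarrow> nat set \<Rightarrow> (nat \<Rightarrow> nat \<Rightarrow> 'f \<times> 'f) \<Rightarrow> (nat \<Rightarrow> nat \<Rightarrow> bool) \<Rightarrow> nat \<Rightarrow> nat \<Rightarrow> bool" where
  "cool_rec1 n t pt enc w H A1 B1 i j =
     (if j \<in> H then cool_s1 n t pt enc w H A1 j else B1 j i)"

definition cool_s2 :: "nat \<Rightarrow> nat \<Rightarrow> (nat \<Rightarrow> 'f::field) \<Rightarrow> ('m \<Rightarrow> nat \<Rightarrow> 'f) \<Rightarrow> (nat \<Rightarrow> 'm)
    \<Rightarrow> nat set \<Rightarrow> (nat \<Rightarrow> nat \<Rightarrow> 'f \<times> 'f) \<Rightarrow> (nat \<Rightarrow> nat \<Rightarrow> bool) \<Rightarrow> nat \<Rightarrow> bool" where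
  "cool_s2 n t pt enc w H A1 B1 i =
     (cool_s1 n t pt enc w H A1 i \<and>
      n - t \<le> card {j \<in> {1..n}. cool_link1 t pt enc w H A1 i j \<and>
                                  cool_rec1 n t pt enc w H A1 B1 i j})"

definition cool_rec2 :: "nat \<Rightarrow> nat \<Rightarrow> (nat \<Rightarrow> 'f::field) \<Rightarrow> ('m \<Rightarrow> nat \<Rightarrow> 'f) \<Rightarrow> (nat \<Rightarrow> 'm)
    \<Rightarrow> nat set \<Rightarrow> (nat \<Rightarrow> nat \<Rightarrow> 'f \<times> 'f) \<Rightarrow> (nat \<Rightarrow> nat \<Rightarrow> bool) \<Rightarrow> (nat \<Rightarrow> nat \<Rightarrow> bool)
    \<Rightarrow> nat \<Rightarrow> nat \<Rightarrow> bool" where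
  "cool_rec2 n t pt enc w H A1 B1 B2 i j =
     (if j \<in> H then cool_s2 n t pt enc w H A1 B1 j else B2 j i)"

definition cool_s3 :: "nat \<Rightarrow> nat \<Rightarrow> (nat \<Rightarrow> 'f::field) \<Rightarrow> ('m \<Rightarrow> nat \<Rightarrow> 'f) \<Rightarrow> (nat \<Rightarrow> 'm)
    \<Rightarrow> nat set \<Rightarrow> (nat \<Rightarrow> nat \<Rightarrow> 'f \<times> 'f) \<Rightarrow> (nat \<Rightarrow> nat \<Rightarrow> bool) \<Rightarrow> (nat \<Rightarrow> nat \<Rightarrow> bool)
    \<Rightarrow> nat \<Rightarrow> bool" where
  "cool_s3 n t pt enc w H A1 B1 B2 i =
     (cool_s2 n t pt enc w H A1 B1 i \<and>
      n - t \<le> card {j \<in> {1..n}. cool_link1 t pt enc w H A1 i j \<and>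
                                  cool_rec1 n t pt enc w H A1 B1 i j \<and>
                                  cool_rec2 n t pt enc w H A1 B1 B2 i j})"

definition eta :: "(nat \<Rightarrow> 'm) \<Rightarrow> nat set \<Rightarrow> (nat \<Rightarrow> bool) \<Rightarrow> nat" where
  "eta w H s = card (w ` {i \<in> H. s i})"

end

theory Submission
  imports Defs "HOL-Computational_Algebra.Polynomial"
begin

text \<open>Codewords are evaluations of interpolation polynomials of degree below
  k = t div 5 + 1, so the codewords of distinct messages a and b agree at fewer than k indices.
  Let a and b be the two messages of honest processors with s1, and let an honest x with
  message a keep s3. At least |H| - t > 2(k - 1) honest members of x's Phase 3 quorum have s2;
  each of them holding b is linked to x and so lies in the agreement set of a and b, hence
  some honest y with s2 and message a lies outside it. Every honest member of y's Phase 2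
  quorum has s1 and cannot hold b, since the link would put y in the agreement set; so at
  least |H| - t honest processors hold a and have s1. If an honest processor with message b
  also kept s3, the same bound for b would give 2(|H| - t) \<le> |H|, contradicting
  |H| \<ge> n - t \<ge> 2t + 1.\<close>

lemma hent_node:
  fixes pt :: "nat \<Rightarrow> 'f::field"
  assumes inj: "inj_on pt {1..k}" and j: "j \<in> {1..k}" and p: "p \<in> {1..k}"
  shows "hent pt k j p = (if j = p then 1 else 0)"
proof (cases "j = p")
  case True
  have "(pt j - pt q) / (pt p - pt q) = 1" if q: "q \<in> {1..k} - {p}" for q
  proof -
    have "pt p \<noteq> pt q" using inj q p by (metis DiffE inj_onD singletonI)
    then show ?thesis using True by simp
  qed
  then show ?thesis unfolding hent_def using True by simp
next
  case False
  then have "j \<in> {1..k} - {p}" using j by simp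
  then show ?thesis unfolding hent_def using False by auto
qed

lemma code_node:
  fixes pt :: "nat \<Rightarrow> 'f::field"
  assumes "inj_on pt {1..k}" and "j \<in> {1..k}"
  shows "code pt k v j = v j"
proof -
  have "code pt k v j = (\<Sum>p\<in>{1..k}. if j = p then v p else 0)"
    unfolding code_def using hent_node[OF assms] by (intro sum.cong) auto
  also have "\<dots> = v j" using assms(2) by simp
  finally show ?thesis .
qed

definition lagrange_poly :: "(nat \<Rightarrow> 'f::field) \<Rightarrow> nat \<Rightarrow> (nat \<Rightarrow> 'f) \<Rightarrow> 'f poly" where
  "lagrange_poly pt k v = (\<Sum>p\<in>{1..k}. smult (v p)
      (\<Prod>q\<in>{1..k} - {p}. [:- pt q / (pt p - pt q), 1 / (pt p - pt q):]))"

lemma poly_lagrange_poly: "poly (lagrange_poly pt k v) (pt j) = code pt k v j"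
  unfolding lagrange_poly_def code_def hent_def
  by (simp add: poly_sum poly_prod mult.commute diff_divide_distrib)

lemma degree_lagrange_poly: "degree (lagrange_poly pt k v) \<le> k - 1"
  unfolding lagrange_poly_def
proof (rule degree_sum_le)
  fix p assume p: "p \<in> {1..k}"
  let ?f = "\<lambda>q. [:- pt q / (pt p - pt q), 1 / (pt p - pt q):]"
  have "degree (\<Prod>q\<in>{1..k} - {p}. ?f q) \<le> (\<Sum>q\<in>{1..k} - {p}. degree (?f q))"
    using degree_prod_sum_le[of "{1..k} - {p}" ?f] by (simp add: comp_def)
  also have "\<dots> \<le> (\<Sum>q\<in>{1..k} - {p}. 1)"
    by (intro sum_mono) simp
  also have "\<dots> = k - 1" using p by simp
  finally show "degree (smult (v p) (\<Prod>q\<in>{1..k} - {p}. ?f q)) \<le> k - 1"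
    using degree_smult_le order_trans by blast
qed simp

lemma card_code_agree_less:
  fixes pt :: "nat \<Rightarrow> 'f::field"
  assumes inj: "inj_on pt A" and nodes: "{1..k} \<subseteq> A" and differ: "\<exists>p\<in>{1..k}. u p \<noteq> v p"
  shows "card {j\<in>A. code pt k u j = code pt k v j} < k"
proof (rule ccontr)
  define Z where "Z = {j\<in>A. code pt k u j = code pt k v j}"
  assume "\<not> card {j\<in>A. code pt k u j = code pt k v j} < k"
  then have "k \<le> card (pt ` Z)"
    using card_image[OF inj_on_subset[OF inj]] unfolding Z_def by fastforce
  moreover have "k \<ge> 1" using differ by auto
  ultimately have "lagrange_poly pt k u = lagrange_poly pt k v"
    using degree_lagrange_poly[of pt k u] degree_lagrange_poly[of pt k v]
    by (intro poly_eqI_degree[where A = "pt ` Z"]) (auto simp: poly_lagrange_poly Z_def)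
  moreover have "inj_on pt {1..k}" using inj nodes by (rule inj_on_subset)
  ultimately have "u p = v p" if "p \<in> {1..k}" for p
    using poly_lagrange_poly[of pt k _ p] code_node that by metis
  then show False using differ by blast
qed

locale cool_execution =
  fixes n t :: nat
    and pt :: "nat \<Rightarrow> 'f::field"
    and enc :: "'m \<Rightarrow> nat \<Rightarrow> 'f"
    and w :: "nat \<Rightarrow> 'm"
    and H :: "nat set"
    and A1 :: "nat \<Rightarrow> nat \<Rightarrow> 'f \<times> 'f"
    and B1 B2 :: "nat \<Rightarrow> nat \<Rightarrow> bool"
  assumes resilient: "3 * t + 1 \<le> n"
    and pt_inj: "inj_on pt {1..n}"
    and enc_inj: "\<And>a b. (\<forall>p\<in>{1..kpar t}. enc a p = enc b p) \<Longrightarrow> a = b"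
    and honest_subset: "H \<subseteq> {1..n}"
    and few_dishonest: "card ({1..n} - H) \<le> t"
begin

abbreviation "codeword m \<equiv> code pt (kpar t) (enc m)"
abbreviation "link \<equiv> cool_link1 t pt enc w H A1"
abbreviation "s1 \<equiv> cool_s1 n t pt enc w H A1"
abbreviation "s2 \<equiv> cool_s2 n t pt enc w H A1 B1"
abbreviation "s3 \<equiv> cool_s3 n t pt enc w H A1 B1 B2"
abbreviation "rec1 \<equiv> cool_rec1 n t pt enc w H A1 B1"
abbreviation "rec2 \<equiv> cool_rec2 n t pt enc w H A1 B1 B2"

lemma finite_honest: "finite H"
  using honest_subset finite_subset by blast

lemma card_honest: "card H + card ({1..n} - H) = n"
  using card_Diff_subset[OF finite_subset[OF honest_subset] honest_subset]
    card_mono[OF _ honest_subset] by simp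

lemma card_honest_margin: "t + 2 * (kpar t - 1) < card H"
  using card_honest few_dishonest resilient unfolding kpar_def by linarith

lemma honest_in_quorum:
  assumes "P \<subseteq> {1..n}" and "n - t \<le> card P"
  shows "card H \<le> card (P \<inter> H) + t"
proof -
  have "card P = card (P \<inter> H) + card (P - H)"
    using assms(1) by (metis card_Int_Diff finite_atLeastAtMost finite_subset)
  moreover have "card (P - H) \<le> card ({1..n} - H)"
    using assms(1) by (intro card_mono) auto
  ultimately show ?thesis using assms(2) card_honest few_dishonest by linarith
qed

lemma card_codeword_agree_less:
  assumes "a \<noteq> b"
  shows "card {j\<in>{1..n}. codeword a j = codeword b j} < kpar t"
proof (rule card_code_agree_less[OF pt_inj])
  show "{1..kpar t} \<subseteq> {1..n}" using resilient by (auto simp: kpar_def)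
  show "\<exists>p\<in>{1..kpar t}. enc a p \<noteq> enc b p" using enc_inj assms by blast
qed

lemma link_honest_agree:
  assumes "i \<in> H" and "j \<in> H" and "link i j"
  shows "codeword (w j) i = codeword (w i) i \<and> codeword (w j) j = codeword (w i) j"
  using assms unfolding cool_link1_def cool_y_def by auto

lemma s2_imp_s1: "s2 i \<Longrightarrow> s1 i"
  unfolding cool_s2_def by blast

lemma s3_imp_s1: "s3 i \<Longrightarrow> s1 i"
  unfolding cool_s3_def cool_s2_def by blast

lemma card_s1_supporters_of_s2:
  assumes messages: "w ` {i\<in>H. s1 i} \<subseteq> {a, b}"
    and y: "y \<in> H" "s2 y" "w y = a" "codeword a y \<noteq> codeword b y"
  shows "card H \<le> card {j\<in>H. s1 j \<and> w j = a} + t"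
proof -
  let ?N = "{j\<in>{1..n}. link y j \<and> rec1 y j}"
  have "card H \<le> card (?N \<inter> H) + t"
    using y(2) unfolding cool_s2_def by (intro honest_in_quorum) auto
  moreover have "?N \<inter> H \<subseteq> {j\<in>H. s1 j \<and> w j = a}"
  proof
    fix j assume j: "j \<in> ?N \<inter> H"
    then have "s1 j" using y(1) by (simp add: cool_rec1_def)
    moreover have "w j \<noteq> b"
      using link_honest_agree[OF y(1)] j y(3,4) by fastforce
    ultimately show "j \<in> {j\<in>H. s1 j \<and> w j = a}" using messages j by blast
  qed
  then have "card (?N \<inter> H) \<le> card {j\<in>H. s1 j \<and> w j = a}"
    using finite_honest by (intro card_mono) auto
  ultimately show ?thesis by linarith
qed

lemma s3_imp_s2_witness:
  assumes messages: "w ` {i\<in>H. s1 i} \<subseteq> {a, b}" and "a \<noteq> b"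
    and x: "x \<in> H" "s3 x" "w x = a"
  obtains y where "y \<in> H" "s2 y" "w y = a" "codeword a y \<noteq> codeword b y"
proof -
  let ?N = "{j\<in>{1..n}. link x j \<and> rec1 x j \<and> rec2 x j}"
  let ?S = "{j\<in>H. s2 j \<and> w j = a}"
  let ?Z = "{j\<in>{1..n}. codeword a j = codeword b j}"
  have cover: "?N \<inter> H \<subseteq> ?S \<union> ?Z"
  proof
    fix j assume "j \<in> ?N \<inter> H"
    then have j: "j \<in> H" "link x j" "rec2 x j" by auto
    then have "s2 j" using x(1) by (simp add: cool_rec2_def)
    show "j \<in> ?S \<union> ?Z"
    proof (cases "w j = a")
      case True
      then show ?thesis using j(1) \<open>s2 j\<close> by simp
    next
      case False
      then have "w j = b" using messages j(1) \<open>s2 j\<close> s2_imp_s1 by blast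
      moreover have "codeword (w j) j = codeword a j"
        using link_honest_agree[OF x(1) j(1,2)] x(3) by simp
      ultimately show ?thesis using j(1) honest_subset by auto
    qed
  qed
  have "card H \<le> card (?N \<inter> H) + t"
    using x(2) unfolding cool_s3_def by (intro honest_in_quorum) auto
  moreover have "card (?N \<inter> H) \<le> card (?S \<union> ?Z)"
    using cover finite_honest by (intro card_mono) auto
  moreover have "card (?S \<union> ?Z) \<le> card ?S + card ?Z" by (rule card_Un_le)
  moreover have "card ?Z < kpar t" using card_codeword_agree_less[OF \<open>a \<noteq> b\<close>] .
  ultimately have "card ?Z < card ?S" using card_honest_margin by linarith
  moreover have "finite ?Z" by simp
  ultimately have "\<not> ?S \<subseteq> ?Z" using card_mono[of ?Z ?S] by linarith
  then obtain y where y: "y \<in> H" "s2 y" "w y = a" "y \<notin> ?Z" by blast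
  then have "codeword a y \<noteq> codeword b y" using honest_subset by auto
  with y show ?thesis using that by blast
qed

lemma card_s1_supporters_of_s3:
  assumes "w ` {i\<in>H. s1 i} \<subseteq> {a, b}" and "a \<noteq> b"
    and "x \<in> H" "s3 x" "w x = a"
  shows "card H \<le> card {j\<in>H. s1 j \<and> w j = a} + t"
proof -
  obtain y where "y \<in> H" "s2 y" "w y = a" "codeword a y \<noteq> codeword b y"
    using s3_imp_s2_witness[OF assms] .
  then show ?thesis using card_s1_supporters_of_s2[OF assms(1)] by blast
qed

theorem eta_s3_le_1_if_eta_s1_eq_2:
  assumes "eta w H s1 = 2"
  shows "eta w H s3 \<le> 1"
proof (rule ccontr)
  obtain a b where messages: "w ` {i\<in>H. s1 i} = {a, b}" and "a \<noteq> b"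
    using assms unfolding eta_def by (meson card_2_iff)
  assume "\<not> eta w H s3 \<le> 1"
  moreover have "w ` {i\<in>H. s3 i} \<subseteq> {a, b}" using messages s3_imp_s1 by blast
  ultimately have s3_messages: "w ` {i\<in>H. s3 i} = {a, b}"
    unfolding eta_def by (intro card_seteq) (auto simp: card_insert_le_m1)
  have "a \<in> w ` {i\<in>H. s3 i}" and "b \<in> w ` {i\<in>H. s3 i}"
    by (simp_all add: s3_messages)
  then obtain xa xb where xa: "xa \<in> H" "s3 xa" "w xa = a" and xb: "xb \<in> H" "s3 xb" "w xb = b"
    by auto
  have "w ` {i\<in>H. s1 i} \<subseteq> {a, b}" and "w ` {i\<in>H. s1 i} \<subseteq> {b, a}"
    using messages by auto
  then have "card H \<le> card {j\<in>H. s1 j \<and> w j = a} + t"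
    and "card H \<le> card {j\<in>H. s1 j \<and> w j = b} + t"
    using card_s1_supporters_of_s3[OF _ \<open>a \<noteq> b\<close> xa] card_s1_supporters_of_s3[OF _ \<open>a \<noteq> b\<close>[symmetric] xb]
    by simp_all
  moreover have "card {j\<in>H. s1 j \<and> w j = a} + card {j\<in>H. s1 j \<and> w j = b}
      = card ({j\<in>H. s1 j \<and> w j = a} \<union> {j\<in>H. s1 j \<and> w j = b})"
    using finite_honest \<open>a \<noteq> b\<close> by (intro card_Un_disjoint[symmetric]) auto
  moreover have "\<dots> \<le> card H"
    using finite_honest by (intro card_mono) auto
  ultimately show False using card_honest few_dishonest resilient by linarith
qed

end

theorem lemma10:
  fixes n t :: nat
    and pt :: "nat \<Rightarrow> 'f::field"
    and enc :: "'m \<Rightarrow> nat \<Rightarrow> 'f"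
    and w :: "nat \<Rightarrow> 'm"
    and H :: "nat set"
    and A1 :: "nat \<Rightarrow> nat \<Rightarrow> 'f \<times> 'f"
    and B1 B2 :: "nat \<Rightarrow> nat \<Rightarrow> bool"
  assumes "n \<ge> 3 * t + 1"
    and "inj_on pt {1..n}"
    and "\<forall>i\<in>{1..n}. pt i \<noteq> 0"
    and "\<forall>a b. (\<forall>p\<in>{1..t div 5 + 1}. enc a p = enc b p) \<longrightarrow> a = b"
    and "H \<subseteq> {1..n}"
    and "card ({1..n} - H) \<le> t"
    and "eta w H (cool_s1 n t pt enc w H A1) = 2"
  shows "eta w H (cool_s3 n t pt enc w H A1 B1 B2) \<le> 1"
proof -
  interpret cool_execution n t pt enc w H A1 B1 B2
    using assms(1,2,4-6) by unfold_locales (auto simp: kpar_def)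
  show ?thesis using eta_s3_le_1_if_eta_s1_eq_2 assms(7) .
qed

end
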